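(* For a barcode $f$, the lifespan series $L(f)$, and hence all $L(f^{\wedge p})$ for $p \ge 1$, can be determined from $C^{\wedge}(f)$: if $f, f'$ are barcodes with $C^{\wedge}(f) = C^{\wedge}(f')$, then $L(f^{\wedge p}) = L(f'^{\wedge p})$ for all integers $p\ge 1$.
   Context: A barcode is a finite formal sum $f = \sum_{i=1}^n x^{\alpha_i}y^{\ell_i}$ with $n\ge 0$, $\alpha_i \in \mathbb{R}$, $\ell_i \in \mathbb{R}_{>0}$ (a finite multiset of bars). Its $p$-th exterior power ($p\ge1$) is $f^{\wedge p} = \sum_{1\le i_1<\cdots<i_p\le n} x^{\alpha_{i_1}+\cdots+\alpha_{i_p}}y^{\min\{\ell_{i_1},\ldots,\ell_{i_p}\}}$ (zero if $p>n$). The lifespan series is $L(f) = \sum_{i=1}^n x^{\ell_i}$, the critical series is $C(f) = \sum_i x^{\alpha_i} - \sum_i x^{\alpha_i+\ell_i}$ (finite integer combinations of symbols $x^g$, $g\in\mathbb{R}$), and $C^{\wedge}(f) = \sum_{p\ge1} C(f^{\wedge p})z^p$ with $z$ an indeterminate. *)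

theory Defs
  imports Complex_Main "HOL-Library.Multiset"
begin

text \<open>A barcode sum_{i=1}^n x^alpha_i y^l_i is represented by the list of its bars
  [(alpha_1,l_1),...,(alpha_n,l_n)]; only the multiset of bars matters.\<close>

definition is_barcode :: "(real \<times> real) list \<Rightarrow> bool" where
  "is_barcode f \<longleftrightarrow> (\<forall>b \<in> set f. snd b > 0)"

definition ext_pow :: "nat \<Rightarrow> (real \<times> real) list \<Rightarrow> (real \<times> real) multiset" where
  "ext_pow p f = image_mset
     (\<lambda>S. (\<Sum>i\<in>S. fst (f ! i), Min ((\<lambda>i. snd (f ! i)) ` S)))
     (mset_set {S. S \<subseteq> {..<length f} \<and> card S = p})"

text \<open>Lifespan series sum_i x^{l_i}: the multiset of exponents.\<close>
definition lifespan :: "(real \<times> real) multiset \<Rightarrow> real multiset" where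
  "lifespan B = image_mset snd B"

text \<open>Critical series sum_i x^{alpha_i} - sum_i x^{alpha_i + l_i}, as the coefficient
  function g \<mapsto> coefficient of x^g (finitely supported integer function).\<close>
definition critical :: "(real \<times> real) multiset \<Rightarrow> real \<Rightarrow> int" where
  "critical B g = int (count (image_mset fst B) g)
                 - int (count (image_mset (\<lambda>(a, l). a + l) B) g)"

text \<open>C^wedge(f) = sum_{p>=1} C(f^p) z^p, as the coefficient function p \<mapsto> C(f^p)
  (coefficient 0 at p = 0).\<close>
definition critical_ext :: "(real \<times> real) list \<Rightarrow> nat \<Rightarrow> real \<Rightarrow> int" where
  "critical_ext f p = (if p \<ge> 1 then critical (ext_pow p f) else (\<lambda>_. 0))"

end

theory Submission
  imports Defs "HOL-Combinatorics.List_Permutation"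
begin

text \<open>A bar (a, l) contributes x^a - x^(a+l) to the critical series, so C(g)
  determines the total lifespan of every barcode g. Hence C^(f) determines, for each p >= 1, the
  sum over all p-element sets of bars of f of their least lifespan. These sums determine the
  multiset of lifespans l_1, ..., l_n of f: as lifespans are positive, n is the largest p with a
  nonzero sum; the sum for p = n is the least lifespan m; and removing one bar of lifespan m
  lowers the p-th sum by (n-1 choose p-1) m, so induction on n applies. Finally L(f^p) depends
  only on that multiset.\<close>

definition subsets_of_card :: "nat \<Rightarrow> 'a set \<Rightarrow> 'a set set" where
  "subsets_of_card k A = {S. S \<subseteq> A \<and> card S = k}"

lemma finite_subsets_of_card: "finite A \<Longrightarrow> finite (subsets_of_card k A)"
  unfolding subsets_of_card_def by (rule finite_subset[of _ "Pow A"]) auto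

lemma subsets_of_card_eq_empty:
  assumes "finite A" "card A < k"
  shows "subsets_of_card k A = {}"
proof -
  have "\<not> (S \<subseteq> A \<and> card S = k)" for S
    using card_mono[OF assms(1), of S] assms(2) by auto
  then show ?thesis
    by (simp add: subsets_of_card_def)
qed

lemma subsets_of_card_card:
  assumes "finite A"
  shows "subsets_of_card (card A) A = {A}"
  using card_subset_eq[OF assms] unfolding subsets_of_card_def by blast

lemma card_subsets_of_card: "finite A \<Longrightarrow> card (subsets_of_card k A) = card A choose k"
  unfolding subsets_of_card_def by (rule n_subsets)

lemma subsets_of_card_Suc_insert:
  assumes "finite A" "a \<notin> A"
  shows "subsets_of_card (Suc k) (insert a A)
           = subsets_of_card (Suc k) A \<union> insert a ` subsets_of_card k A"
proof (intro equalityI subsetI)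
  fix S assume S: "S \<in> subsets_of_card (Suc k) (insert a A)"
  show "S \<in> subsets_of_card (Suc k) A \<union> insert a ` subsets_of_card k A"
  proof (cases "a \<in> S")
    case True
    then have "S - {a} \<in> subsets_of_card k A" "S = insert a (S - {a})"
      using S assms finite_subset[of S "insert a A"] by (auto simp: subsets_of_card_def)
    then show ?thesis by blast
  qed (use S in \<open>auto simp: subsets_of_card_def\<close>)
next
  fix S assume "S \<in> subsets_of_card (Suc k) A \<union> insert a ` subsets_of_card k A"
  then consider "S \<in> subsets_of_card (Suc k) A"
    | T where "T \<in> subsets_of_card k A" "S = insert a T"
    by blast
  then show "S \<in> subsets_of_card (Suc k) (insert a A)"
  proof cases
    case 1
    then show ?thesis by (auto simp: subsets_of_card_def)
  next
    case (2 T)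
    then have "finite T" "a \<notin> T"
      using assms finite_subset by (auto simp: subsets_of_card_def)
    with 2 show ?thesis by (auto simp: subsets_of_card_def)
  qed
qed

lemma bij_betw_image_subsets_of_card:
  assumes "bij_betw h A B"
  shows "bij_betw (image h) (subsets_of_card k A) (subsets_of_card k B)"
proof -
  have inj: "inj_on h A" and surj: "h ` A = B"
    using assms by (auto simp: bij_betw_def)
  have card: "card (h ` S) = card S" if "S \<subseteq> A" for S
    using inj that by (meson card_image inj_on_subset)
  have "inj_on (image h) (subsets_of_card k A)"
    using inj_on_image_Pow[OF inj] by (rule inj_on_subset) (auto simp: subsets_of_card_def)
  moreover have "image h ` subsets_of_card k A = subsets_of_card k B"
  proof (intro equalityI subsetI)
    fix T assume "T \<in> subsets_of_card k B"
    then obtain S where "S \<subseteq> A" "T = h ` S" "card T = k"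
      using surj by (auto simp: subsets_of_card_def subset_image_iff)
    then show "T \<in> image h ` subsets_of_card k A"
      using card by (auto simp: subsets_of_card_def)
  qed (use surj card in \<open>auto simp: subsets_of_card_def\<close>)
  ultimately show ?thesis by (simp add: bij_betw_def)
qed

text \<open>Sublists are taken by position, so repeated entries count separately.\<close>
definition sublist_minima :: "nat \<Rightarrow> real list \<Rightarrow> real multiset" where
  "sublist_minima k ls =
     image_mset (\<lambda>S. Min ((!) ls ` S)) (mset_set (subsets_of_card k {..<length ls}))"

lemma sublist_minima_eq_empty: "length ls < k \<Longrightarrow> sublist_minima k ls = {#}"
  by (simp add: sublist_minima_def subsets_of_card_eq_empty)

lemma sublist_minima_length: "sublist_minima (length ls) ls = {#Min (set ls)#}"
proof -
  have "(!) ls ` {..<length ls} = set ls"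
    by (auto simp: in_set_conv_nth)
  then show ?thesis
    using subsets_of_card_card[of "{..<length ls}"] by (simp add: sublist_minima_def)
qed

lemma sublist_minima_mset_eq:
  assumes "mset ls = mset ls'"
  shows "sublist_minima k ls = sublist_minima k ls'"
proof -
  obtain h where h: "bij_betw h {..<length ls} {..<length ls'}"
    and nth: "\<And>i. i < length ls \<Longrightarrow> ls ! i = ls' ! h i"
    using permutation_Ex_bij[OF assms] by blast
  let ?I = "subsets_of_card k {..<length ls}"
  have "bij_betw (image h) ?I (subsets_of_card k {..<length ls'})"
    using h by (rule bij_betw_image_subsets_of_card)
  then have "mset_set (subsets_of_card k {..<length ls'}) = image_mset (image h) (mset_set ?I)"
    by (simp add: bij_betw_def image_mset_mset_set)
  then have "sublist_minima k ls' = image_mset (\<lambda>S. Min ((!) ls' ` h ` S)) (mset_set ?I)"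
    by (simp add: sublist_minima_def multiset.map_comp comp_def)
  also have "\<dots> = sublist_minima k ls"
    unfolding sublist_minima_def
  proof (rule image_mset_cong)
    fix S assume "S \<in># mset_set ?I"
    then have "S \<subseteq> {..<length ls}"
      by (simp add: finite_subsets_of_card subsets_of_card_def)
    then have "(!) ls' ` h ` S = (!) ls ` S"
      unfolding image_image using nth by (intro image_cong) auto
    then show "Min ((!) ls' ` h ` S) = Min ((!) ls ` S)" by simp
  qed
  finally show ?thesis ..
qed

text \<open>Appending a new least entry x adds one new (k+1)-subset with minimum x for every
  k-subset of the old positions.\<close>
lemma sublist_minima_Suc_append_least:
  assumes "\<forall>y\<in>set xs. x \<le> y"
  shows "sublist_minima (Suc k) (xs @ [x])
           = sublist_minima (Suc k) xs + replicate_mset (length xs choose k) x"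
proof -
  let ?n = "length xs" and ?m = "\<lambda>S. Min ((!) (xs @ [x]) ` S)"
  let ?old = "subsets_of_card (Suc k) {..<?n}" and ?new = "subsets_of_card k {..<?n}"
  have split: "subsets_of_card (Suc k) {..<length (xs @ [x])} = ?old \<union> insert ?n ` ?new"
    using subsets_of_card_Suc_insert[of "{..<?n}" ?n k] by (simp add: lessThan_Suc)
  have disj: "?old \<inter> insert ?n ` ?new = {}"
    by (auto simp: subsets_of_card_def)
  have inj: "inj_on (insert ?n) ?new"
  proof (rule inj_onI)
    fix S T assume "S \<in> ?new" "T \<in> ?new" "insert ?n S = insert ?n T"
    moreover from this have "?n \<notin> S" "?n \<notin> T"
      by (auto simp: subsets_of_card_def)
    ultimately show "S = T"
      by (metis insert_ident)
  qed
  have old: "image_mset ?m (mset_set ?old) = sublist_minima (Suc k) xs"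
    unfolding sublist_minima_def
  proof (rule image_mset_cong)
    fix S assume "S \<in># mset_set ?old"
    then have "S \<subseteq> {..<?n}" by (simp add: finite_subsets_of_card subsets_of_card_def)
    then have "(!) (xs @ [x]) ` S = (!) xs ` S"
      by (intro image_cong) (auto simp: nth_append)
    then show "?m S = Min ((!) xs ` S)" by simp
  qed
  have new: "image_mset ?m (mset_set (insert ?n ` ?new)) = replicate_mset (?n choose k) x"
  proof -
    have "?m (insert ?n S) = x" if "S \<in> ?new" for S
    proof -
      have S: "S \<subseteq> {..<?n}" "finite S"
        using that finite_subset by (auto simp: subsets_of_card_def)
      then have "(!) (xs @ [x]) ` insert ?n S = insert x ((!) xs ` S)"
        by (auto simp: nth_append subset_iff)
      moreover have "Min (insert x ((!) xs ` S)) = x"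
        using S assms by (intro Min_insert2) auto
      ultimately show ?thesis by simp
    qed
    then have "image_mset (?m \<circ> insert ?n) (mset_set ?new) = image_mset (\<lambda>_. x) (mset_set ?new)"
      by (intro image_mset_cong) (simp add: finite_subsets_of_card)
    then show ?thesis
      by (simp add: image_mset_mset_set[OF inj, symmetric] image_mset_const_eq
          card_subsets_of_card flip: multiset.map_comp)
  qed
  show ?thesis
    unfolding sublist_minima_def[of _ "xs @ [x]"] split
    using mset_set_Union[OF finite_subsets_of_card finite_imageI[OF finite_subsets_of_card] disj]
      old new by simp
qed

lemma sum_sublist_minima_Suc_append_least:
  assumes "\<forall>y\<in>set xs. x \<le> y"
  shows "\<Sum>\<^sub># (sublist_minima (Suc k) (xs @ [x]))
           = \<Sum>\<^sub># (sublist_minima (Suc k) xs) + real (length xs choose k) * x"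
  by (simp add: sublist_minima_Suc_append_least[OF assms])

lemma mset_eq_if_sum_sublist_minima_eq_of_same_length:
  assumes "length ls = length ls'"
    and "\<forall>k\<ge>1. \<Sum>\<^sub># (sublist_minima k ls) = \<Sum>\<^sub># (sublist_minima k ls')"
  shows "mset ls = mset ls'"
  using assms
proof (induction "length ls" arbitrary: ls ls')
  case 0
  then show ?case by simp
next
  case (Suc n)
  then have nonempty: "ls \<noteq> []" "ls' \<noteq> []" by auto
  define x where "x = Min (set ls)"
  have "\<Sum>\<^sub># (sublist_minima (length ls) ls) = \<Sum>\<^sub># (sublist_minima (length ls') ls')"
    using Suc.prems(2)[rule_format, of "length ls"] Suc.hyps(2) Suc.prems(1) by simp
  then have min_eq: "Min (set ls') = x"
    unfolding x_def sublist_minima_length by simp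
  have x: "x \<in> set ls" and least: "\<forall>y\<in>set ls. x \<le> y"
    using nonempty(1) by (simp_all add: x_def)
  have x': "x \<in> set ls'" and least': "\<forall>y\<in>set ls'. x \<le> y"
    using nonempty(2) by (simp_all flip: min_eq)
  define xs xs' where "xs = remove1 x ls" and "xs' = remove1 x ls'"
  have mset: "mset ls = mset (xs @ [x])" "mset ls' = mset (xs' @ [x])"
    using x x' by (simp_all add: xs_def xs'_def)
  have length: "length xs = n" "length xs' = n"
    using x x' Suc.hyps(2) Suc.prems(1) by (simp_all add: xs_def xs'_def length_remove1)
  have least_xs: "\<forall>y\<in>set xs. x \<le> y" "\<forall>y\<in>set xs'. x \<le> y"
    using least least' set_remove1_subset by (fastforce simp: xs_def xs'_def)+
  have "\<Sum>\<^sub># (sublist_minima k xs) = \<Sum>\<^sub># (sublist_minima k xs')" if "k \<ge> 1" for k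
  proof -
    obtain q where q: "k = Suc q" using \<open>k \<ge> 1\<close> by (cases k) auto
    have "\<Sum>\<^sub># (sublist_minima k (xs @ [x])) = \<Sum>\<^sub># (sublist_minima k (xs' @ [x]))"
      using Suc.prems(2) that by (simp add: sublist_minima_mset_eq[OF mset(1)]
          sublist_minima_mset_eq[OF mset(2)])
    then show ?thesis
      by (simp add: q length sum_sublist_minima_Suc_append_least[OF least_xs(1)]
          sum_sublist_minima_Suc_append_least[OF least_xs(2)])
  qed
  then have "mset xs = mset xs'"
    using Suc.hyps(1)[of xs xs'] length by simp
  then show ?case
    using mset by simp
qed

lemma length_le_if_sum_sublist_minima_eq:
  assumes "\<forall>y\<in>set ls. y > 0"
    and "\<forall>k\<ge>1. \<Sum>\<^sub># (sublist_minima k ls) = \<Sum>\<^sub># (sublist_minima k ls')"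
  shows "length ls \<le> length ls'"
proof (rule ccontr)
  assume "\<not> length ls \<le> length ls'"
  then have shorter: "length ls' < length ls" and nonempty: "ls \<noteq> []" "length ls \<ge> 1"
    by auto
  have "0 < Min (set ls)"
    using assms(1) nonempty by (simp add: Min_gr_iff)
  also have "Min (set ls) = \<Sum>\<^sub># (sublist_minima (length ls) ls)"
    by (simp add: sublist_minima_length)
  also have "\<dots> = \<Sum>\<^sub># (sublist_minima (length ls) ls')"
    using assms(2)[rule_format, of "length ls"] nonempty by simp
  also have "\<dots> = 0"
    by (simp add: sublist_minima_eq_empty[OF shorter])
  finally show False by simp
qed

lemma mset_eq_if_sum_sublist_minima_eq:
  assumes "\<forall>y\<in>set ls. y > 0" and "\<forall>y\<in>set ls'. y > 0"
    and "\<forall>k\<ge>1. \<Sum>\<^sub># (sublist_minima k ls) = \<Sum>\<^sub># (sublist_minima k ls')"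
  shows "mset ls = mset ls'"
proof -
  have "length ls = length ls'"
    using length_le_if_sum_sublist_minima_eq[OF assms(1,3)]
      length_le_if_sum_sublist_minima_eq[OF assms(2)] assms(3) by (simp add: le_antisym)
  then show ?thesis
    using assms(3) by (rule mset_eq_if_sum_sublist_minima_eq_of_same_length)
qed

lemma lifespan_ext_pow: "lifespan (ext_pow k f) = sublist_minima k (map snd f)"
  unfolding lifespan_def ext_pow_def sublist_minima_def subsets_of_card_def multiset.map_comp
    length_map
proof (rule image_mset_cong)
  fix S assume "S \<in># mset_set {S. S \<subseteq> {..<length f} \<and> card S = k}"
  then have "S \<subseteq> {..<length f}"
    using finite_subsets_of_card[of "{..<length f}" k] by (simp add: subsets_of_card_def)
  then have "(\<lambda>i. snd (f ! i)) ` S = (!) (map snd f) ` S"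
    by (intro image_cong) auto
  then show "(snd \<circ> (\<lambda>S. (\<Sum>i\<in>S. fst (f ! i), Min ((\<lambda>i. snd (f ! i)) ` S)))) S
      = Min ((!) (map snd f) ` S)"
    by simp
qed

lemma sum_lifespan_eq_if_critical_eq:
  assumes "critical B = critical B'"
  shows "\<Sum>\<^sub># (lifespan B) = \<Sum>\<^sub># (lifespan B')"
proof -
  let ?birth = "image_mset fst" and ?death = "image_mset (\<lambda>(a, l). a + l)"
  have "?birth B + ?death B' = ?birth B' + ?death B"
  proof (rule multiset_eqI)
    fix g
    show "count (?birth B + ?death B') g = count (?birth B' + ?death B) g"
      using fun_cong[OF assms, of g] by (simp add: critical_def)
  qed
  then have "\<Sum>\<^sub># (?birth B) + \<Sum>\<^sub># (?death B') = \<Sum>\<^sub># (?birth B') + \<Sum>\<^sub># (?death B)"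
    by (metis sum_mset.union)
  moreover have "\<Sum>\<^sub># (?death C) = \<Sum>\<^sub># (?birth C) + \<Sum>\<^sub># (lifespan C)" for C
    by (induction C) (auto simp: lifespan_def)
  ultimately show ?thesis by simp
qed

theorem proposition9:
  fixes f f' :: "(real \<times> real) list"
  assumes "is_barcode f" and "is_barcode f'"
    and "critical_ext f = critical_ext f'"
  shows "\<forall>p::nat. p \<ge> 1 \<longrightarrow> lifespan (ext_pow p f) = lifespan (ext_pow p f')"
proof -
  have "\<Sum>\<^sub># (sublist_minima k (map snd f)) = \<Sum>\<^sub># (sublist_minima k (map snd f'))"
    if "k \<ge> 1" for k
  proof -
    have "critical (ext_pow k f) = critical (ext_pow k f')"
      using fun_cong[OF assms(3), of k] that by (simp add: critical_ext_def)
    then have "\<Sum>\<^sub># (lifespan (ext_pow k f)) = \<Sum>\<^sub># (lifespan (ext_pow k f'))"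
      by (rule sum_lifespan_eq_if_critical_eq)
    then show ?thesis
      by (simp only: lifespan_ext_pow)
  qed
  moreover have "\<forall>y\<in>set (map snd f). y > 0" "\<forall>y\<in>set (map snd f'). y > 0"
    using assms(1,2) by (auto simp: is_barcode_def)
  ultimately have "mset (map snd f) = mset (map snd f')"
    by (intro mset_eq_if_sum_sublist_minima_eq) auto
  then have "sublist_minima p (map snd f) = sublist_minima p (map snd f')" for p
    by (rule sublist_minima_mset_eq)
  then show ?thesis
    by (simp add: lifespan_ext_pow)
qed

end
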